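(* For every $\delta>0$ there exist $C>0$ and a sequence $(\varepsilon_j)_{j\in\mathbb N}$ in $(0,1)$ with $\varepsilon_j\to0$, $\varepsilon_j/2\le\varepsilon_{j+1}\le\varepsilon_j$ for all $j$, and such that for all $j\in\mathbb N$ and all integers $n\ge1$, $$\phi_n^j:=\inf\{|\varepsilon_j-p/n|:\ p\in\mathbb Z\}\ \ge\ C\,\varepsilon_j\,e^{-n^2\pi^2\delta}.$$ *)

theory Defs
  imports Complex_Main
begin

end

theory Submission
  imports Defs "HOL-Computational_Algebra.Nth_Powers"
begin

(* Take eps_j = sqrt 2 / 2^(j+1). Being a quadratic irrational, sqrt 2 is badly
   approximable: |sqrt 2 - m/n| >= 1/(5 n^2). Scaling by 2^(j+1) gives
   |eps_j - p/n| >= eps_j / (5 sqrt 2 n^2), and 1/n^2 >= a exp (-a n^2) for a = pi^2 delta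
   since x exp (-x) <= 1. *)

definition badly_approximable :: "real \<Rightarrow> real \<Rightarrow> bool" where
  "badly_approximable c \<alpha> \<longleftrightarrow>
     (\<forall>m::int. \<forall>n::nat. n \<ge> 1 \<longrightarrow> c / real n ^ 2 \<le> \<bar>\<alpha> - of_int m / real n\<bar>)"

lemma two_not_square_int: "\<not> is_nth_power 2 (2::int)"
proof
  assume "is_nth_power 2 (2::int)"
  then obtain y :: int where y: "y ^ 2 = 2"
    by (auto elim: is_nth_powerE)
  show False
  proof (cases "\<bar>y\<bar> \<le> 1")
    case True
    then have "y ^ 2 \<le> 1 ^ 2"
      using abs_le_square_iff [of y 1] by simp
    with y show False by simp
  next
    case False
    then have "2 ^ 2 \<le> y ^ 2"
      using abs_le_square_iff [of 2 y] by simp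
    with y show False by simp
  qed
qed

lemma square_neq_two_times_square:
  fixes m n :: int
  assumes "n \<noteq> 0"
  shows "m ^ 2 \<noteq> 2 * n ^ 2"
proof
  assume "m ^ 2 = 2 * n ^ 2"
  then have "is_nth_power 2 (2 * n ^ 2)"
    by (metis is_nth_power_nth_power)
  with assms have "is_nth_power 2 (2::int)"
    by (simp add: is_nth_power_mult_cancel_right)
  with two_not_square_int show False ..
qed

lemma badly_approximable_sqrt_2: "badly_approximable (1/5) (sqrt 2)"
  unfolding badly_approximable_def
proof (intro allI impI)
  fix m :: int and n :: nat
  assume n: "n \<ge> 1"
  define q where "q = of_int m / real n"
  have npos: "real n > 0"
    using n by simp
  have "1 / 5 / real n ^ 2 \<le> \<bar>sqrt 2 - q\<bar>"
  proof (cases "\<bar>sqrt 2 - q\<bar> < 1")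
    case True
    have "(sqrt 2 - q) * (sqrt 2 + q) = of_int (2 * int n ^ 2 - m ^ 2) / real n ^ 2"
      using npos by (simp add: q_def field_simps power2_eq_square)
    moreover have "\<bar>2 * int n ^ 2 - m ^ 2\<bar> \<ge> 1"
      using square_neq_two_times_square [of "int n" m] n by linarith
    ultimately have "1 / real n ^ 2 \<le> \<bar>sqrt 2 - q\<bar> * \<bar>sqrt 2 + q\<bar>"
      using npos by (simp add: abs_mult [symmetric] divide_right_mono
                               del: of_int_diff)
    also have "\<dots> \<le> \<bar>sqrt 2 - q\<bar> * 5"
      using True sqrt2_less_2 real_sqrt_ge_zero [of 2]
      by (intro mult_left_mono) linarith+
    finally show ?thesis
      by (simp add: field_simps)
  next
    case False
    have "1 \<le> real n ^ 2"
      using n by simp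
    then have "1 / 5 / real n ^ 2 \<le> 1"
      by (simp add: divide_le_eq)
    with False show ?thesis
      by linarith
  qed
  then show "1 / 5 / real n ^ 2 \<le> \<bar>sqrt 2 - of_int m / real n\<bar>"
    by (simp add: q_def)
qed

lemma badly_approximable_divide:
  assumes "badly_approximable c \<alpha>" and k: "k \<ge> 1"
  shows "badly_approximable (c / real k) (\<alpha> / real k)"
  unfolding badly_approximable_def
proof (intro allI impI)
  fix p :: int and n :: nat
  assume n: "n \<ge> 1"
  define m where "m = int k * p"
  have "\<alpha> / real k - of_int p / real n = (\<alpha> - of_int m / real n) / real k"
    using n k by (simp add: m_def field_simps)
  then have dist: "\<bar>\<alpha> / real k - of_int p / real n\<bar> = \<bar>\<alpha> - of_int m / real n\<bar> / real k"
    by (simp add: abs_divide)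
  have "c / real n ^ 2 \<le> \<bar>\<alpha> - of_int m / real n\<bar>"
    using assms(1) n unfolding badly_approximable_def by blast
  then have "c / real n ^ 2 / real k \<le> \<bar>\<alpha> - of_int m / real n\<bar> / real k"
    by (rule divide_right_mono) simp
  then show "c / real k / real n ^ 2 \<le> \<bar>\<alpha> / real k - of_int p / real n\<bar>"
    by (simp add: dist divide_divide_eq_left mult.commute)
qed

lemma mult_exp_neg_le_1: "x * exp (- x) \<le> (1::real)"
proof -
  have "x \<le> exp x"
    using exp_ge_add_one_self [of x] by linarith
  then show ?thesis
    by (simp add: exp_minus field_simps)
qed

lemma badly_approximable_exp_bound:
  assumes "badly_approximable c \<alpha>" and "c \<ge> 0" and n: "n \<ge> 1"
  shows "c * a * exp (- (real n ^ 2 * a)) \<le> \<bar>\<alpha> - of_int p / real n\<bar>"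
proof -
  have "a * exp (- (real n ^ 2 * a)) \<le> 1 / real n ^ 2"
    using mult_exp_neg_le_1 [of "real n ^ 2 * a"] n by (simp add: field_simps)
  then have "c * a * exp (- (real n ^ 2 * a)) \<le> c / real n ^ 2"
    using mult_left_mono [OF _ \<open>c \<ge> 0\<close>] by fastforce
  also have "\<dots> \<le> \<bar>\<alpha> - of_int p / real n\<bar>"
    using assms unfolding badly_approximable_def by blast
  finally show ?thesis .
qed

theorem lemma3:
  fixes \<delta> :: real
  assumes "\<delta> > 0"
  shows "\<exists>C::real. C > 0 \<and> (\<exists>\<epsilon>::nat \<Rightarrow> real.
           (\<forall>j. 0 < \<epsilon> j \<and> \<epsilon> j < 1) \<and>
           \<epsilon> \<longlonglongrightarrow> 0 \<and>
           (\<forall>j. \<epsilon> j / 2 \<le> \<epsilon> (Suc j) \<and> \<epsilon> (Suc j) \<le> \<epsilon> j) \<and>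
           (\<forall>j. \<forall>n::nat. n \<ge> 1 \<longrightarrow>
              (INF p\<in>(UNIV::int set). \<bar>\<epsilon> j - real_of_int p / real n\<bar>)
                \<ge> C * \<epsilon> j * exp (- (real n ^ 2 * pi ^ 2 * \<delta>))))"
proof -
  define a where "a = pi ^ 2 * \<delta>"
  define C where "C = a / (5 * sqrt 2)"
  define \<epsilon> where "\<epsilon> j = sqrt 2 / 2 / 2 ^ j" for j :: nat
  have "0 < \<epsilon> j \<and> \<epsilon> j < 1" for j
  proof -
    have "0 < \<epsilon> j" and "\<epsilon> j \<le> sqrt 2 / 2"
      by (simp_all add: \<epsilon>_def divide_le_eq)
    then show ?thesis
      using sqrt2_less_2 by linarith
  qed
  moreover have "\<epsilon> \<longlonglongrightarrow> 0"
    unfolding \<epsilon>_def by (rule LIMSEQ_divide_realpow_zero) simp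
  moreover have "\<epsilon> j / 2 \<le> \<epsilon> (Suc j) \<and> \<epsilon> (Suc j) \<le> \<epsilon> j" for j
    by (simp add: \<epsilon>_def field_simps)
  moreover have "C * \<epsilon> j * exp (- (real n ^ 2 * pi ^ 2 * \<delta>))
                   \<le> (INF p\<in>(UNIV::int set). \<bar>\<epsilon> j - real_of_int p / real n\<bar>)"
    if "n \<ge> 1" for j n
  proof -
    have "badly_approximable (1 / 5 / real (2 ^ Suc j)) (sqrt 2 / real (2 ^ Suc j))"
      by (rule badly_approximable_divide [OF badly_approximable_sqrt_2]) simp
    then have "badly_approximable (\<epsilon> j / (5 * sqrt 2)) (\<epsilon> j)"
      by (simp add: \<epsilon>_def field_simps)
    then have "\<epsilon> j / (5 * sqrt 2) * a * exp (- (real n ^ 2 * a))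
                 \<le> \<bar>\<epsilon> j - real_of_int p / real n\<bar>" for p
      by (rule badly_approximable_exp_bound) (use \<open>n \<ge> 1\<close> \<open>0 < \<epsilon> j \<and> \<epsilon> j < 1\<close> in auto)
    moreover have "C * \<epsilon> j * exp (- (real n ^ 2 * pi ^ 2 * \<delta>))
                     = \<epsilon> j / (5 * sqrt 2) * a * exp (- (real n ^ 2 * a))"
      by (simp add: C_def a_def mult_ac)
    ultimately show ?thesis
      by (intro cINF_greatest) simp_all
  qed
  moreover have "C > 0"
    using assms by (simp add: C_def a_def)
  ultimately show ?thesis
    by blast
qed

end
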